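(* Assume (H1). There exist constants $\kappa,\delta_0\in(0,1]$ such that for every $\theta>1/d$ there is a $[1,\infty]$-valued random variable $R_0$, finite $\mathbb P$-a.s., such that for $\mathbb P$-a.e. $\omega$ and all $R>R_0(\omega)$, $$\mu\big(B^{x_1,x_2}_{r,\delta_0}(y)\big)\ge\kappa\,\mu(B_r(y))$$ for all $x_1,x_2,y\in B_R$ with $x_1\neq x_2$ and all $r\in[\log^\theta R,\,R]$.
   Context: Assumption (H1): on a probability space $(\Omega,\mathcal F,\mathbb P)$, $\{w_{x,y}\}$, indexed by unordered pairs of distinct points of $\mathbb Z^d$, are i.i.d. non-negative random variables with $w_{x,y}=w_{y,x}$, $\mathbb E[w_{x,y}]=1$ and $w_{x,y}\le M$ for a constant $M>0$. Here $d\ge1$, $\mu$ is counting measure on $\mathbb Z^d$, $B_R(y)=(y+(-R,R]^d)\cap\mathbb Z^d$, $B_R=B_R(0)$, and for $x_1,x_2,y\in\mathbb Z^d$, $\delta,R>0$: $B^{x_1,x_2}_{R,\delta}(y)=\{z\in B_R(y)\setminus\{x_1,x_2\}:\ w_{x_1,z}>\delta,\ w_{x_2,z}>\delta\}$. *)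

theory Defs
  imports "HOL-Probability.Probability"
begin

text \<open>Points of Z^d are vectors of type int^'d, d = CARD('d).\<close>

definition unordered_pairs :: "('a set) set" where
  "unordered_pairs = {{x, y} | x y. x \<noteq> y}"

definition box :: "real \<Rightarrow> int^'d \<Rightarrow> (int^'d) set" where
  "box R y = {z. \<forall>i. - R < real_of_int (z$i - y$i) \<and> real_of_int (z$i - y$i) \<le> R}"

definition Bdelta :: "((int^'d) set \<Rightarrow> real) \<Rightarrow> real \<Rightarrow> real \<Rightarrow> int^'d \<Rightarrow> int^'d \<Rightarrow> int^'d \<Rightarrow> (int^'d) set" where
  "Bdelta w R \<delta> x1 x2 y = {z \<in> box R y - {x1, x2}. w {x1, z} > \<delta> \<and> w {x2, z} > \<delta>}"

end

theory Submission
  imports Defs "HOL-Real_Asymp.Real_Asymp"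
begin

(* Each weight exceeds 1/2 with probability p >= 1/(2 Mw) (reverse Markov inequality). For fixed
   x1 ~= x2 the events "z is a common 1/2-neighbour of x1 and x2" are independent in z, each of
   probability at least p^2, so by Hoeffding's inequality a box S has fewer than p^2 |S| / 4 common
   neighbours with probability at most exp (- p^4 |S| / 2). A box depends on its radius r only
   through floor r + ceiling r, so at scale N (points in B_(N+1), radii in [(ln N)^theta, N + 1])
   there are only polynomially many configurations, each failing with probability at most
   exp (- p^4 (ln N)^(theta d) / 2). As theta d > 1 these bounds are summable, and Borel-Cantelli
   yields a random scale R0 beyond which no configuration fails. *)

definition box_side :: "real \<Rightarrow> int set" where
  "box_side r = {t. - r < real_of_int t \<and> real_of_int t \<le> r}"

lemma mem_box_side_iff: "t \<in> box_side r \<longleftrightarrow> 1 - \<lceil>r\<rceil> \<le> t \<and> t \<le> \<lfloor>r\<rfloor>"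
proof -
  have "- r < real_of_int t \<longleftrightarrow> real_of_int (- t) < r"
    by auto
  also have "\<dots> \<longleftrightarrow> 1 - \<lceil>r\<rceil> \<le> t"
    unfolding less_ceiling_iff[symmetric] by linarith
  finally show ?thesis
    unfolding box_side_def le_floor_iff by blast
qed

lemma box_side_eq_atLeastAtMost: "box_side r = {1 - \<lceil>r\<rceil>..\<lfloor>r\<rfloor>}"
  by (simp add: set_eq_iff mem_box_side_iff)

lemma card_box_side: "card (box_side r) = nat (\<lfloor>r\<rfloor> + \<lceil>r\<rceil>)"
  by (simp add: box_side_eq_atLeastAtMost)

lemma box_side_mid_radius: "box_side (real_of_int (\<lfloor>r\<rfloor> + \<lceil>r\<rceil>) / 2) = box_side r"
proof -
  have half: "t \<in> box_side (real_of_int k / 2) \<longleftrightarrow> - k < 2 * t \<and> 2 * t \<le> k" for t k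
  proof -
    have "t \<in> box_side (real_of_int k / 2) \<longleftrightarrow>
        real_of_int (- k) < real_of_int (2 * t) \<and> real_of_int (2 * t) \<le> real_of_int k"
      unfolding box_side_def mem_Collect_eq of_int_minus of_int_mult of_int_numeral by linarith
    then show ?thesis
      unfolding of_int_less_iff of_int_le_iff .
  qed
  have "- (a + b) < 2 * t \<and> 2 * t \<le> a + b \<longleftrightarrow> 1 - b \<le> t \<and> t \<le> a"
    if "a \<le> b" "b \<le> a + 1" for a b t :: int
    using that by (smt (z3))
  moreover have "\<lfloor>r\<rfloor> \<le> \<lceil>r\<rceil>" "\<lceil>r\<rceil> \<le> \<lfloor>r\<rfloor> + 1"
    by (simp_all add: ceiling_le_iff)
  ultimately show ?thesis
    unfolding set_eq_iff mem_box_side_iff[of _ r] half by blast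
qed

lemma box_eq_box_side: "box r y = {z. \<forall>i. z$i - y$i \<in> box_side r}"
  by (simp add: box_def box_side_def)

lemma box_eq_image_PiE: "box r y = (\<lambda>f. \<chi> i. y$i + f i) ` (UNIV \<rightarrow>\<^sub>E box_side r)"
proof (rule set_eqI, rule iffI)
  fix z assume "z \<in> box r y"
  then have "(\<lambda>i. z$i - y$i) \<in> UNIV \<rightarrow>\<^sub>E box_side r"
    by (simp add: box_eq_box_side PiE_iff)
  then show "z \<in> (\<lambda>f. \<chi> i. y$i + f i) ` (UNIV \<rightarrow>\<^sub>E box_side r)"
    by (rule rev_image_eqI) (simp add: vec_eq_iff)
qed (auto simp: box_eq_box_side PiE_iff)

lemma card_box: "card (box r (y::int^'d)) = nat (\<lfloor>r\<rfloor> + \<lceil>r\<rceil>) ^ CARD('d)"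
proof -
  have "inj_on (\<lambda>f. \<chi> i. y$i + f i :: int^'d) (UNIV \<rightarrow>\<^sub>E box_side r)"
    by (rule inj_onI) (simp add: vec_eq_iff fun_eq_iff)
  then show ?thesis
    by (simp add: box_eq_image_PiE card_image card_PiE card_box_side)
qed

lemma finite_box: "finite (box r (y::int^'d))"
  by (simp add: box_eq_image_PiE box_side_eq_atLeastAtMost finite_PiE)

lemma box_mono:
  assumes "r \<le> s"
  shows "box r y \<subseteq> box s y"
proof
  fix z assume z: "z \<in> box r y"
  have "- s < real_of_int (z$i - y$i) \<and> real_of_int (z$i - y$i) \<le> s" for i
  proof -
    have "- r < real_of_int (z$i - y$i) \<and> real_of_int (z$i - y$i) \<le> r"
      using z unfolding box_def by blast
    with assms show ?thesis by linarith
  qed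
  then show "z \<in> box s y"
    unfolding box_def by blast
qed

lemma box_mid_radius: "box (real_of_int (\<lfloor>r\<rfloor> + \<lceil>r\<rceil>) / 2) y = box r y"
  unfolding box_eq_box_side box_side_mid_radius ..

lemma card_box_half_radius: "card (box (real m / 2) (y::int^'d)) = m ^ CARD('d)"
proof -
  have "\<lfloor>real m / 2\<rfloor> + \<lceil>real m / 2\<rceil> = int m"
  proof (cases "even m")
    case True
    then show ?thesis by (auto elim!: evenE)
  next
    case False
    then obtain q where q: "m = 2 * q + 1"
      by (blast elim: oddE)
    have "\<lfloor>real m / 2\<rfloor> = int q" "\<lceil>real m / 2\<rceil> = int q + 1"
      unfolding q by (simp_all add: floor_eq_iff ceiling_eq_iff)
    then show ?thesis
      using q by simp
  qed
  then show ?thesis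
    by (simp add: card_box)
qed

definition common_nbrs :: "('v set \<Rightarrow> real) \<Rightarrow> real \<Rightarrow> 'v \<Rightarrow> 'v \<Rightarrow> 'v set \<Rightarrow> 'v set" where
  "common_nbrs w \<delta> x1 x2 S = {z \<in> S - {x1, x2}. \<delta> < w {x1, z} \<and> \<delta> < w {x2, z}}"

lemma Bdelta_eq_common_nbrs: "Bdelta w r \<delta> x1 x2 y = common_nbrs w \<delta> x1 x2 (box r y)"
  unfolding Bdelta_def common_nbrs_def by auto

lemma card_common_nbrs_eq_sum:
  assumes "finite S"
  shows "real (card (common_nbrs w \<delta> x1 x2 S)) =
    (\<Sum>z\<in>S - {x1, x2}. of_bool (\<delta> < w {x1, z} \<and> \<delta> < w {x2, z}))"
  using assms by (simp add: common_nbrs_def Int_def)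

lemma (in prob_space) reverse_markov_inequality:
  fixes W :: "'a \<Rightarrow> real"
  assumes [measurable]: "W \<in> borel_measurable M"
    and bounded: "AE \<omega> in M. 0 \<le> W \<omega> \<and> W \<omega> \<le> b" and "0 \<le> a" "0 < b"
  shows "(expectation W - a) / b \<le> prob {\<omega> \<in> space M. a < W \<omega>}"
proof -
  define A where "A = {\<omega> \<in> space M. a < W \<omega>}"
  have [measurable]: "A \<in> events"
    unfolding A_def by measurable
  have "integrable M W"
    by (rule integrable_const_bound[where B = b]) (use bounded in auto)
  moreover have "integrable M (\<lambda>\<omega>. a + b * indicator A \<omega>)"
    by (intro Bochner_Integration.integrable_add integrable_mult_right integrable_real_indicator)
      (auto simp: less_top[symmetric])
  moreover have "AE \<omega> in M. W \<omega> \<le> a + b * indicator A \<omega>"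
    using bounded AE_space by eventually_elim (use \<open>0 \<le> a\<close> in \<open>auto simp: A_def indicator_def\<close>)
  ultimately have "expectation W \<le> expectation (\<lambda>\<omega>. a + b * indicator A \<omega>)"
    by (rule integral_mono_AE)
  also have "\<dots> = a + b * prob A"
    by (simp add: prob_space less_top[symmetric])
  finally show ?thesis
    using \<open>0 < b\<close> by (simp add: A_def pos_divide_le_eq mult.commute)
qed

lemma (in prob_space) prob_both_gt_eq_mult:
  fixes W :: "'i \<Rightarrow> 'a \<Rightarrow> real"
  assumes ind: "indep_vars (\<lambda>_. borel) W E" and "e1 \<in> E" "e2 \<in> E" "e1 \<noteq> e2"
  shows "prob {\<omega> \<in> space M. \<delta> < W e1 \<omega> \<and> \<delta> < W e2 \<omega>} =
    prob {\<omega> \<in> space M. \<delta> < W e1 \<omega>} * prob {\<omega> \<in> space M. \<delta> < W e2 \<omega>}"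
proof -
  have level_set: "W e -` {\<delta><..} \<inter> space M = {\<omega> \<in> space M. \<delta> < W e \<omega>}" for e
    by auto
  have "{\<omega> \<in> space M. \<delta> < W e1 \<omega> \<and> \<delta> < W e2 \<omega>} = (\<Inter>e\<in>{e1, e2}. W e -` {\<delta><..} \<inter> space M)"
    by auto
  also have "prob \<dots> = (\<Prod>e\<in>{e1, e2}. prob (W e -` {\<delta><..} \<inter> space M))"
    using assms by (intro indep_varsD[OF ind]) auto
  finally show ?thesis
    using \<open>e1 \<noteq> e2\<close> by (simp add: level_set)
qed

lemma (in prob_space) indep_vars_common_nbr_indicators:
  fixes W :: "'v set \<Rightarrow> 'a \<Rightarrow> real"
  assumes ind: "indep_vars (\<lambda>_. borel) W unordered_pairs" and "x1 \<noteq> x2"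
  shows "indep_vars (\<lambda>_. borel)
    (\<lambda>z \<omega>. of_bool (\<delta> < W {x1, z} \<omega> \<and> \<delta> < W {x2, z} \<omega>) :: real) (S - {x1, x2})"
proof -
  define K where "K z = {{x1, z}, {x2, z}}" for z
  have "indep_vars (\<lambda>z. PiM (K z) (\<lambda>_. borel)) (\<lambda>z \<omega>. restrict (\<lambda>e. W e \<omega>) (K z)) (S - {x1, x2})"
  proof (rule indep_vars_restrict[OF ind])
    show "K z \<subseteq> unordered_pairs" if "z \<in> S - {x1, x2}" for z
      using that by (auto simp: K_def unordered_pairs_def)
    show "disjoint_family_on K (S - {x1, x2})"
      using \<open>x1 \<noteq> x2\<close> by (auto simp: disjoint_family_on_def K_def doubleton_eq_iff)
  qed
  then have "indep_vars (\<lambda>_. borel)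
      (\<lambda>z \<omega>. (\<lambda>f. of_bool (\<delta> < f {x1, z} \<and> \<delta> < f {x2, z}) :: real) (restrict (\<lambda>e. W e \<omega>) (K z)))
      (S - {x1, x2})"
  proof (rule indep_vars_compose2)
    fix z
    have [measurable]: "(\<lambda>f. f {x1, z}) \<in> borel_measurable (PiM (K z) (\<lambda>_. borel))"
      "(\<lambda>f. f {x2, z}) \<in> borel_measurable (PiM (K z) (\<lambda>_. borel))"
      by (auto simp: K_def intro!: measurable_component_singleton)
    show "(\<lambda>f. of_bool (\<delta> < f {x1, z} \<and> \<delta> < f {x2, z}) :: real)
        \<in> borel_measurable (PiM (K z) (\<lambda>_. borel))"
      by measurable
  qed
  then show ?thesis
    by (rule indep_vars_cong[THEN iffD1, rotated 3]) (auto simp: K_def)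
qed

lemma (in prob_space) expectation_common_nbr_indicator_ge:
  fixes W :: "'v set \<Rightarrow> 'a \<Rightarrow> real"
  assumes ind: "indep_vars (\<lambda>_. borel) W unordered_pairs"
    and heavy: "\<And>e. e \<in> unordered_pairs \<Longrightarrow> p \<le> prob {\<omega> \<in> space M. \<delta> < W e \<omega>}"
    and "0 \<le> p" "x1 \<noteq> x2" "z \<notin> {x1, x2}"
  shows "p\<^sup>2 \<le> expectation (\<lambda>\<omega>. of_bool (\<delta> < W {x1, z} \<omega> \<and> \<delta> < W {x2, z} \<omega>) :: real)"
proof -
  have pairs: "{x1, z} \<in> unordered_pairs" "{x2, z} \<in> unordered_pairs" "{x1, z} \<noteq> {x2, z}"
    using assms(4,5) by (auto simp: unordered_pairs_def doubleton_eq_iff)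
  have "(\<lambda>\<omega>. of_bool (\<delta> < W {x1, z} \<omega> \<and> \<delta> < W {x2, z} \<omega>) :: real) =
      indicator {\<omega>. \<delta> < W {x1, z} \<omega> \<and> \<delta> < W {x2, z} \<omega>}"
    by (simp add: fun_eq_iff indicator_def)
  then have "expectation (\<lambda>\<omega>. of_bool (\<delta> < W {x1, z} \<omega> \<and> \<delta> < W {x2, z} \<omega>) :: real) =
      prob {\<omega> \<in> space M. \<delta> < W {x1, z} \<omega> \<and> \<delta> < W {x2, z} \<omega>}"
    by (simp add: Int_def conj_commute)
  also have "\<dots> = prob {\<omega> \<in> space M. \<delta> < W {x1, z} \<omega>} * prob {\<omega> \<in> space M. \<delta> < W {x2, z} \<omega>}"
    using pairs by (intro prob_both_gt_eq_mult[OF ind]) auto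
  finally show ?thesis
    using heavy[OF pairs(1)] heavy[OF pairs(2)] \<open>0 \<le> p\<close>
    by (simp add: power2_eq_square mult_mono)
qed

definition (in prob_space) few_common_nbrs ::
    "('v set \<Rightarrow> 'a \<Rightarrow> real) \<Rightarrow> real \<Rightarrow> real \<Rightarrow> 'v \<Rightarrow> 'v \<Rightarrow> 'v set \<Rightarrow> 'a set" where
  "few_common_nbrs W \<kappa> \<delta> x1 x2 S =
    {\<omega> \<in> space M. real (card (common_nbrs (\<lambda>e. W e \<omega>) \<delta> x1 x2 S)) < \<kappa> * real (card S)}"

lemma (in prob_space) few_common_nbrs_in_events:
  fixes W :: "'v set \<Rightarrow> 'a \<Rightarrow> real"
  assumes ind: "indep_vars (\<lambda>_. borel) W unordered_pairs" and "finite S"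
  shows "few_common_nbrs W \<kappa> \<delta> x1 x2 S \<in> events"
proof -
  have "(\<lambda>\<omega>. of_bool (\<delta> < W {x1, z} \<omega> \<and> \<delta> < W {x2, z} \<omega>) :: real) \<in> borel_measurable M"
    if "z \<in> S - {x1, x2}" for z
  proof -
    have "{x1, z} \<in> unordered_pairs" "{x2, z} \<in> unordered_pairs"
      using that by (auto simp: unordered_pairs_def)
    then have [measurable]: "W {x1, z} \<in> borel_measurable M" "W {x2, z} \<in> borel_measurable M"
      using ind by (auto simp: indep_vars_def2)
    show ?thesis by measurable
  qed
  then have "(\<lambda>\<omega>. real (card (common_nbrs (\<lambda>e. W e \<omega>) \<delta> x1 x2 S))) \<in> borel_measurable M"
    unfolding card_common_nbrs_eq_sum[OF \<open>finite S\<close>] by (rule borel_measurable_sum)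
  then show ?thesis
    unfolding few_common_nbrs_def by measurable
qed

(* Hoeffding: the mean number of common neighbours is at least p^2 (|S| - 2), and |S| >= 8 puts
   the threshold p^2 |S| / 4 at least p^2 |S| / 2 below it. *)
lemma (in prob_space) prob_few_common_nbrs_le:
  fixes W :: "'v set \<Rightarrow> 'a \<Rightarrow> real"
  assumes ind: "indep_vars (\<lambda>_. borel) W unordered_pairs"
    and heavy: "\<And>e. e \<in> unordered_pairs \<Longrightarrow> p \<le> prob {\<omega> \<in> space M. \<delta> < W e \<omega>}"
    and "0 < p" "x1 \<noteq> x2" "finite S" "8 \<le> card S"
  shows "prob (few_common_nbrs W (p\<^sup>2 / 4) \<delta> x1 x2 S) \<le> exp (- (p ^ 4 * real (card S) / 2))"
proof -
  define I where "I = S - {x1, x2}"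
  define X where "X z \<omega> = (of_bool (\<delta> < W {x1, z} \<omega> \<and> \<delta> < W {x2, z} \<omega>) :: real)" for z \<omega>
  define \<mu> where "\<mu> = (\<Sum>z\<in>I. expectation (X z))"
  define \<epsilon> where "\<epsilon> = real (card S) * p\<^sup>2 / 2"
  have "finite I"
    using \<open>finite S\<close> by (simp add: I_def)
  have "card S - card {x1, x2} \<le> card I"
    unfolding I_def by (rule diff_card_le_card_Diff) simp
  then have card_I: "real (card S) - 2 \<le> real (card I)" "card I \<le> card S"
    using \<open>x1 \<noteq> x2\<close> \<open>finite S\<close> by (auto simp: I_def card_mono)
  interpret Hoeffding_ineq M I X "\<lambda>_. 0" "\<lambda>_. 1" \<mu>
  proof unfold_locales
    show "indep_vars (\<lambda>_. borel) X I"
      unfolding X_def I_def using ind \<open>x1 \<noteq> x2\<close> by (rule indep_vars_common_nbr_indicators)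
  qed (auto simp: \<open>finite I\<close> X_def \<mu>_def)
  have "p\<^sup>2 \<le> expectation (X z)" if "z \<in> I" for z
    using that \<open>0 < p\<close> \<open>x1 \<noteq> x2\<close> unfolding X_def I_def
    by (intro expectation_common_nbr_indicator_ge[OF ind]) (auto intro: heavy)
  then have "real (card I) * p\<^sup>2 \<le> \<mu>"
    unfolding \<mu>_def using sum_mono[of I "\<lambda>_. p\<^sup>2"] by simp
  moreover have "real (card S) * p\<^sup>2 \<le> real (card I) * p\<^sup>2 + 2 * p\<^sup>2"
    using mult_right_mono[OF card_I(1), of "p\<^sup>2"] by (simp add: algebra_simps)
  moreover have "8 * p\<^sup>2 \<le> real (card S) * p\<^sup>2"
    using \<open>8 \<le> card S\<close> by (intro mult_right_mono) auto
  moreover have "p\<^sup>2 / 4 * real (card S) = real (card S) * p\<^sup>2 / 4"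
    by simp
  ultimately have threshold: "p\<^sup>2 / 4 * real (card S) \<le> \<mu> - \<epsilon>"
    unfolding \<epsilon>_def by linarith
  have "(\<lambda>\<omega>. \<Sum>z\<in>I. X z \<omega>) \<in> borel_measurable M"
    using random_variable by (intro borel_measurable_sum) auto
  then have "{\<omega> \<in> space M. (\<Sum>z\<in>I. X z \<omega>) \<le> \<mu> - \<epsilon>} \<in> events"
    by measurable
  then have "prob (few_common_nbrs W (p\<^sup>2 / 4) \<delta> x1 x2 S) \<le> prob {\<omega> \<in> space M. (\<Sum>z\<in>I. X z \<omega>) \<le> \<mu> - \<epsilon>}"
    using threshold \<open>finite S\<close>
    by (intro finite_measure_mono)
      (auto simp: few_common_nbrs_def card_common_nbrs_eq_sum I_def X_def)
  also have "\<dots> \<le> exp (-2 * \<epsilon>\<^sup>2 / (\<Sum>z\<in>I. (1 - 0)\<^sup>2))"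
    using \<open>0 < p\<close> card_I \<open>8 \<le> card S\<close> by (intro Hoeffding_ineq_le) (auto simp: \<epsilon>_def)
  also have "\<dots> \<le> exp (- (p ^ 4 * real (card S) / 2))"
  proof -
    have "p ^ 4 * real (card S) / 2 * real (card I) \<le> p ^ 4 * real (card S) / 2 * real (card S)"
      using card_I by (intro mult_left_mono) auto
    also have "\<dots> = 2 * \<epsilon>\<^sup>2"
      by (simp add: \<epsilon>_def power2_eq_square power4_eq_xxxx)
    finally show ?thesis
      using card_I \<open>8 \<le> card S\<close> by (simp add: field_simps)
  qed
  finally show ?thesis .
qed

lemma (in prob_space) borel_cantelli_threshold:
  assumes events: "\<And>N. A N \<in> events" and summable: "summable (\<lambda>N. prob (A N))"
  obtains R\<^sub>0 :: "'a \<Rightarrow> ereal"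
  where "R\<^sub>0 \<in> borel_measurable M" "AE \<omega> in M. R\<^sub>0 \<omega> < \<infinity>"
    "\<And>\<omega> N. R\<^sub>0 \<omega> < ereal (real N + 1) \<Longrightarrow> \<omega> \<notin> A N"
proof -
  define G where "G n = {\<omega> \<in> space M. \<forall>N\<ge>n. \<omega> \<notin> A N}" for n :: nat
  define R\<^sub>0 where "R\<^sub>0 \<omega> = (INF n. if \<omega> \<in> G n then ereal (real n) else \<infinity>)" for \<omega>
  have "G n = space M - (\<Union>N\<in>{n..}. A N)" for n
    by (auto simp: G_def)
  then have G_events: "G n \<in> events" for n
    using events by auto
  have measurable: "R\<^sub>0 \<in> borel_measurable M"
    unfolding R\<^sub>0_def using G_events by (intro borel_measurable_INF measurable_If_set) auto
  have "AE \<omega> in M. eventually (\<lambda>N. \<omega> \<in> space M - A N) sequentially"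
    using events summable by (intro borel_cantelli_AE1) (auto simp: less_top[symmetric])
  then have finite: "AE \<omega> in M. R\<^sub>0 \<omega> < \<infinity>"
  proof eventually_elim
    case (elim \<omega>)
    then obtain n where "\<omega> \<in> G n"
      by (auto simp: G_def eventually_sequentially)
    then have "R\<^sub>0 \<omega> \<le> ereal (real n)"
      unfolding R\<^sub>0_def by (intro INF_lower2[of n]) auto
    then show ?case
      using le_less_trans by fastforce
  qed
  have avoids: "\<omega> \<notin> A N" if "R\<^sub>0 \<omega> < ereal (real N + 1)" for \<omega> N
  proof -
    have "\<exists>n. (if \<omega> \<in> G n then ereal (real n) else \<infinity>) < ereal (real N + 1)"
      using that unfolding R\<^sub>0_def INF_less_iff by simp
    then obtain n where "\<omega> \<in> G n" "n \<le> N"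
      by (auto split: if_splits)
    then show ?thesis
      by (auto simp: G_def)
  qed
  show ?thesis
    by (rule that[OF measurable finite avoids])
qed

lemma summable_poly_times_exp_neg_ln_powr:
  assumes "1 < s" "0 < c"
  shows "summable (\<lambda>N::nat. (2 * real N + 2) ^ k * (2 * real N + 3) * exp (- (c * ln (real N) powr s)))"
proof (rule summable_comparison_test_bigo)
  show "summable (\<lambda>N::nat. norm (1 / real N ^ 2))"
    using inverse_power_summable[of 2, where 'a = real] by (simp add: divide_inverse)
  show "(\<lambda>N. (2 * real N + 2) ^ k * (2 * real N + 3) * exp (- (c * ln (real N) powr s)))
      \<in> O(\<lambda>N. 1 / real N ^ 2)"
    using assms by real_asymp
qed

(* The last component m stands for the radius m / 2, which by box_mid_radius covers every box. *)
definition scale_configs :: "nat \<Rightarrow> real \<Rightarrow> ((int^'d) \<times> (int^'d) \<times> (int^'d) \<times> nat) set" where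
  "scale_configs N L = {(x1, x2, y, m). x1 \<in> box (real N + 1) 0 \<and> x2 \<in> box (real N + 1) 0 \<and>
    y \<in> box (real N + 1) 0 \<and> x1 \<noteq> x2 \<and> L \<le> real m \<and> m \<le> 2 * N + 2}"

lemma scale_configs_subset:
  "scale_configs N L \<subseteq> box (real N + 1) 0 \<times> box (real N + 1) 0 \<times> box (real N + 1) 0 \<times> {..2 * N + 2}"
  by (auto simp: scale_configs_def)

lemma finite_scale_configs: "finite (scale_configs N L)"
  by (rule finite_subset[OF scale_configs_subset]) (simp add: finite_box)

lemma card_scale_configs_le:
  "card (scale_configs N L :: ((int^'d) \<times> _) set) \<le> (2 * N + 2) ^ (3 * CARD('d)) * (2 * N + 3)"
proof -
  define B where "B = box (real N + 1) (0::int^'d)"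
  have "\<lfloor>real N + 1\<rfloor> = int N + 1" "\<lceil>real N + 1\<rceil> = int N + 1"
    by (simp_all add: floor_eq_iff ceiling_eq_iff)
  then have card_B: "card B = (2 * N + 2) ^ CARD('d)"
    unfolding B_def card_box by (simp add: nat_add_distrib nat_mult_distrib)
  have "card (scale_configs N L :: ((int^'d) \<times> _) set) \<le> card (B \<times> B \<times> B \<times> {..2 * N + 2})"
    unfolding B_def by (intro card_mono scale_configs_subset) (simp add: finite_box)
  also have "\<dots> = card B ^ 3 * (2 * N + 3)"
    by (simp add: card_cartesian_product power3_eq_cube algebra_simps)
  also have "\<dots> = (2 * N + 2) ^ (3 * CARD('d)) * (2 * N + 3)"
    unfolding card_B by (simp add: power_mult[symmetric] mult.commute)
  finally show ?thesis .
qed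

lemma dense_of_scale_configs:
  fixes w :: "(int^'d) set \<Rightarrow> real"
  assumes dense: "\<And>x1 x2 y m. (x1, x2, y, m) \<in> scale_configs N L \<Longrightarrow>
      \<kappa> * real (card (box (real m / 2) y)) \<le> real (card (common_nbrs w \<delta> x1 x2 (box (real m / 2) y)))"
    and R: "R \<le> real N + 1"
    and x: "x1 \<in> box R 0" "x2 \<in> box R 0" "y \<in> box R 0" "x1 \<noteq> x2"
    and r: "0 \<le> L" "L \<le> r" "r \<le> R"
  shows "\<kappa> * real (card (box r y)) \<le> real (card (Bdelta w r \<delta> x1 x2 y))"
proof -
  define m where "m = nat (\<lfloor>r\<rfloor> + \<lceil>r\<rceil>)"
  have "real m = real_of_int (\<lfloor>r\<rfloor> + \<lceil>r\<rceil>)"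
    using r by (simp add: m_def)
  then have box_m: "box (real m / 2) y = box r y"
    using box_mid_radius[of r y] by simp
  have "\<lceil>r\<rceil> \<le> int N + 1"
    using r R by (simp add: ceiling_le_iff)
  then have m_le: "m \<le> 2 * N + 2"
    unfolding m_def using floor_le_ceiling[of r] by linarith
  have "0 \<le> real_of_int \<lfloor>r\<rfloor>"
    using r by simp
  then have L_le: "L \<le> real m"
    using \<open>real m = _\<close> r le_of_int_ceiling[of r] by linarith
  have "box R 0 \<subseteq> box (real N + 1) 0"
    by (rule box_mono[OF R])
  with x m_le L_le have "(x1, x2, y, m) \<in> scale_configs N L"
    by (auto simp: scale_configs_def)
  from dense[OF this] show ?thesis
    unfolding box_m Bdelta_eq_common_nbrs .
qed

definition (in prob_space) scale_failure ::
    "((int^'d) set \<Rightarrow> 'a \<Rightarrow> real) \<Rightarrow> real \<Rightarrow> real \<Rightarrow> nat \<Rightarrow> real \<Rightarrow> 'a set" where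
  "scale_failure W \<kappa> \<delta> N L =
    (\<Union>(x1, x2, y, m) \<in> scale_configs N L. few_common_nbrs W \<kappa> \<delta> x1 x2 (box (real m / 2) y))"

lemma (in prob_space) scale_failure_in_events:
  fixes W :: "(int^'d) set \<Rightarrow> 'a \<Rightarrow> real"
  assumes ind: "indep_vars (\<lambda>_. borel) W unordered_pairs"
  shows "scale_failure W \<kappa> \<delta> N L \<in> events"
  unfolding scale_failure_def using few_common_nbrs_in_events[OF ind finite_box] finite_scale_configs
  by (auto intro!: sets.finite_UN)

lemma (in prob_space) prob_scale_failure_le:
  fixes W :: "(int^'d) set \<Rightarrow> 'a \<Rightarrow> real"
  assumes ind: "indep_vars (\<lambda>_. borel) W unordered_pairs"
    and heavy: "\<And>e. e \<in> unordered_pairs \<Longrightarrow> p \<le> prob {\<omega> \<in> space M. \<delta> < W e \<omega>}"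
    and "0 < p" "8 \<le> L"
  shows "prob (scale_failure W (p\<^sup>2 / 4) \<delta> N L)
    \<le> real (card (scale_configs N L :: ((int^'d) \<times> _) set)) * exp (- (p ^ 4 * L ^ CARD('d) / 2))"
proof -
  define E where "E c = (case c of (x1, x2, y, m) \<Rightarrow>
    few_common_nbrs W (p\<^sup>2 / 4) \<delta> x1 x2 (box (real m / 2) y))" for c
  have bound: "prob (E c) \<le> exp (- (p ^ 4 * L ^ CARD('d) / 2))" if "c \<in> scale_configs N L" for c
  proof -
    obtain x1 x2 y m where c: "c = (x1, x2, y, m)"
      by (cases c) auto
    have "x1 \<noteq> x2" "L \<le> real m"
      using that by (auto simp: c scale_configs_def)
    have "real m \<le> real m ^ CARD('d)"
      using \<open>8 \<le> L\<close> \<open>L \<le> real m\<close> by (intro self_le_power) auto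
    then have card: "8 \<le> card (box (real m / 2) y)"
      using \<open>8 \<le> L\<close> \<open>L \<le> real m\<close> unfolding card_box_half_radius by simp
    have "prob (E c) \<le> exp (- (p ^ 4 * real (card (box (real m / 2) y)) / 2))"
      unfolding c E_def prod.case
      by (rule prob_few_common_nbrs_le[OF ind _ \<open>0 < p\<close> \<open>x1 \<noteq> x2\<close> finite_box card]) (rule heavy)
    also have "\<dots> = exp (- (p ^ 4 * real m ^ CARD('d) / 2))"
      by (simp add: card_box_half_radius)
    also have "\<dots> \<le> exp (- (p ^ 4 * L ^ CARD('d) / 2))"
      using \<open>8 \<le> L\<close> \<open>L \<le> real m\<close> by (auto intro!: mult_left_mono power_mono)
    finally show ?thesis .
  qed
  have "scale_failure W (p\<^sup>2 / 4) \<delta> N L = (\<Union>c \<in> scale_configs N L. E c)"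
    by (simp add: scale_failure_def E_def)
  also have "prob \<dots> \<le> (\<Sum>c \<in> scale_configs N L. prob (E c))"
    using few_common_nbrs_in_events[OF ind finite_box]
    by (intro finite_measure_subadditive_finite finite_scale_configs) (auto simp: E_def split: prod.split)
  also have "\<dots> \<le> real (card (scale_configs N L :: ((int^'d) \<times> _) set)) * exp (- (p ^ 4 * L ^ CARD('d) / 2))"
    using bound by (rule sum_bounded_above)
  finally show ?thesis .
qed

(* The only use of theta > 1/d: (ln N powr theta)^d = ln N powr (theta d) with theta d > 1
   outgrows every multiple of ln N, so the failure bound beats every polynomial in N. *)
lemma (in prob_space) summable_prob_scale_failure:
  fixes W :: "(int^'d) set \<Rightarrow> 'a \<Rightarrow> real" and \<theta> :: real
  assumes ind: "indep_vars (\<lambda>_. borel) W unordered_pairs"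
    and heavy: "\<And>e. e \<in> unordered_pairs \<Longrightarrow> p \<le> prob {\<omega> \<in> space M. \<delta> < W e \<omega>}"
    and "0 < p" and \<theta>: "1 / real CARD('d) < \<theta>"
  shows "summable (\<lambda>N. prob (scale_failure W (p\<^sup>2 / 4) \<delta> N (ln (real N) powr \<theta>)))"
proof -
  define d where "d = CARD('d)"
  define L where "L N = ln (real N) powr \<theta>" for N :: nat
  have "0 < real d"
    by (simp add: d_def)
  then have "0 < 1 / real d"
    by simp
  then have "0 < \<theta>"
    using \<theta> unfolding d_def by linarith
  have "1 < \<theta> * real d"
    using \<theta> \<open>0 < real d\<close> unfolding d_def by (simp add: divide_less_eq)
  have "eventually (\<lambda>N. 8 \<le> L N) sequentially"
    unfolding L_def using \<open>0 < \<theta>\<close> by real_asymp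
  then have "eventually (\<lambda>N. norm (prob (scale_failure W (p\<^sup>2 / 4) \<delta> N (L N))) \<le>
      (2 * real N + 2) ^ (3 * d) * (2 * real N + 3) * exp (- (p ^ 4 / 2 * ln (real N) powr (\<theta> * real d))))
    sequentially"
  proof eventually_elim
    case (elim N)
    then have "ln (real N) \<noteq> 0"
      by (auto simp: L_def)
    then have L_power: "L N ^ d = ln (real N) powr (\<theta> * real d)"
      by (simp add: L_def powr_power mult.commute)
    have "prob (scale_failure W (p\<^sup>2 / 4) \<delta> N (L N))
        \<le> real (card (scale_configs N (L N) :: ((int^'d) \<times> _) set)) * exp (- (p ^ 4 * L N ^ d / 2))"
      unfolding d_def by (rule prob_scale_failure_le[OF ind _ \<open>0 < p\<close> elim]) (rule heavy)
    also have "\<dots> \<le> real ((2 * N + 2) ^ (3 * d) * (2 * N + 3)) * exp (- (p ^ 4 * L N ^ d / 2))"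
      unfolding d_def by (intro mult_right_mono of_nat_mono card_scale_configs_le) auto
    also have "\<dots> = (2 * real N + 2) ^ (3 * d) * (2 * real N + 3) *
        exp (- (p ^ 4 / 2 * ln (real N) powr (\<theta> * real d)))"
      unfolding L_power
      by (simp only: of_nat_mult of_nat_power of_nat_add of_nat_numeral times_divide_eq_left)
    finally show ?case
      by simp
  qed
  moreover have "summable (\<lambda>N. (2 * real N + 2) ^ (3 * d) * (2 * real N + 3) *
      exp (- (p ^ 4 / 2 * ln (real N) powr (\<theta> * real d))))"
    using \<open>0 < p\<close> \<open>1 < \<theta> * real d\<close> by (intro summable_poly_times_exp_neg_ln_powr) auto
  ultimately show ?thesis
    unfolding L_def by (rule summable_comparison_test_ev)
qed

lemma (in prob_space) dense_if_no_scale_failure: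
  fixes W :: "(int^'d) set \<Rightarrow> 'a \<Rightarrow> real"
  assumes "\<omega> \<in> space M" "\<omega> \<notin> scale_failure W \<kappa> \<delta> N (ln (real N) powr \<theta>)" "0 \<le> \<theta>"
    and R: "real N \<le> R" "R < real N + 1"
    and x: "x1 \<in> box R 0" "x2 \<in> box R 0" "y \<in> box R 0" "x1 \<noteq> x2"
    and r: "ln R powr \<theta> \<le> r" "r \<le> R"
  shows "\<kappa> * real (card (box r y)) \<le> real (card (Bdelta (\<lambda>e. W e \<omega>) r \<delta> x1 x2 y))"
proof (rule dense_of_scale_configs)
  show "\<kappa> * real (card (box (real m / 2) y')) \<le>
      real (card (common_nbrs (\<lambda>e. W e \<omega>) \<delta> x1' x2' (box (real m / 2) y')))"
    if "(x1', x2', y', m) \<in> scale_configs N (ln (real N) powr \<theta>)" for x1' x2' y' m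
    using that assms(1,2) by (force simp: scale_failure_def few_common_nbrs_def not_less)
  show "ln (real N) powr \<theta> \<le> r"
  proof (cases "N = 0")
    case False
    then have "ln (real N) powr \<theta> \<le> ln R powr \<theta>"
      using R \<open>0 \<le> \<theta>\<close> by (intro powr_mono2) auto
    with r show ?thesis
      by linarith
  qed (use r order_trans[OF powr_ge_zero] in simp)
qed (use R x r in auto)

lemma (in prob_space) dense_common_nbrs_eventually:
  fixes W :: "(int^'d) set \<Rightarrow> 'a \<Rightarrow> real" and \<theta> :: real
  assumes ind: "indep_vars (\<lambda>_. borel) W unordered_pairs"
    and heavy: "\<And>e. e \<in> unordered_pairs \<Longrightarrow> p \<le> prob {\<omega> \<in> space M. \<delta> < W e \<omega>}"
    and "0 < p" and \<theta>: "1 / real CARD('d) < \<theta>"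
  shows "\<exists>R\<^sub>0 :: 'a \<Rightarrow> ereal. R\<^sub>0 \<in> borel_measurable M \<and> (\<forall>\<omega>. 1 \<le> R\<^sub>0 \<omega>) \<and>
    (AE \<omega> in M. R\<^sub>0 \<omega> < \<infinity>) \<and>
    (AE \<omega> in M. \<forall>R::real. ereal R > R\<^sub>0 \<omega> \<longrightarrow>
      (\<forall>x1 \<in> box R 0. \<forall>x2 \<in> box R 0. \<forall>y \<in> box R 0. \<forall>r::real.
        x1 \<noteq> x2 \<longrightarrow> (ln R) powr \<theta> \<le> r \<longrightarrow> r \<le> R \<longrightarrow>
        real (card (Bdelta (\<lambda>e. W e \<omega>) r \<delta> x1 x2 y)) \<ge> p\<^sup>2 / 4 * real (card (box r y))))"
proof -
  let ?A = "\<lambda>N. scale_failure W (p\<^sup>2 / 4) \<delta> N (ln (real N) powr \<theta>)"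
  have "summable (\<lambda>N. prob (?A N))"
    by (rule summable_prob_scale_failure[OF ind _ \<open>0 < p\<close> \<theta>]) (rule heavy)
  then obtain R\<^sub>0 where R\<^sub>0: "R\<^sub>0 \<in> borel_measurable M" "AE \<omega> in M. R\<^sub>0 \<omega> < \<infinity>"
    and avoids: "\<And>\<omega> N. R\<^sub>0 \<omega> < ereal (real N + 1) \<Longrightarrow> \<omega> \<notin> ?A N"
    by (rule borel_cantelli_threshold[OF scale_failure_in_events[OF ind]]) (rule that)
  have "0 < 1 / real CARD('d)"
    by simp
  then have "0 \<le> \<theta>"
    using \<theta> by linarith
  have dense: "p\<^sup>2 / 4 * real (card (box r y)) \<le> real (card (Bdelta (\<lambda>e. W e \<omega>) r \<delta> x1 x2 y))"
    if "\<omega> \<in> space M" "max 1 (R\<^sub>0 \<omega>) < ereal R" "x1 \<in> box R 0" "x2 \<in> box R 0" "y \<in> box R 0"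
      "x1 \<noteq> x2" "ln R powr \<theta> \<le> r" "r \<le> R"
    for \<omega> R x1 x2 y r
  proof -
    define N where "N = nat \<lfloor>R\<rfloor>"
    have "1 < ereal R" "R\<^sub>0 \<omega> < ereal R"
      using that(2) by (simp_all add: max_less_iff_conj)
    then have "1 < R"
      by simp
    then have N: "real N \<le> R" "R < real N + 1"
      unfolding N_def by linarith+
    then have "R\<^sub>0 \<omega> < ereal (real N + 1)"
      using \<open>R\<^sub>0 \<omega> < ereal R\<close> by (meson less_ereal.simps(1) less_trans)
    then have "\<omega> \<notin> ?A N"
      by (rule avoids)
    then show ?thesis
      using that N \<open>0 \<le> \<theta>\<close> by (intro dense_if_no_scale_failure) auto
  qed
  show ?thesis
  proof (intro exI conjI)
    show "(\<lambda>\<omega>. max 1 (R\<^sub>0 \<omega>)) \<in> borel_measurable M"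
      using R\<^sub>0(1) by measurable
    show "\<forall>\<omega>. 1 \<le> max 1 (R\<^sub>0 \<omega>)"
      by simp
    show "AE \<omega> in M. max 1 (R\<^sub>0 \<omega>) < \<infinity>"
      using R\<^sub>0(2) by eventually_elim (auto simp: max_def)
    show "AE \<omega> in M. \<forall>R::real. ereal R > max 1 (R\<^sub>0 \<omega>) \<longrightarrow>
      (\<forall>x1 \<in> box R 0. \<forall>x2 \<in> box R 0. \<forall>y \<in> box R 0. \<forall>r::real.
        x1 \<noteq> x2 \<longrightarrow> (ln R) powr \<theta> \<le> r \<longrightarrow> r \<le> R \<longrightarrow>
        real (card (Bdelta (\<lambda>e. W e \<omega>) r \<delta> x1 x2 y)) \<ge> p\<^sup>2 / 4 * real (card (box r y)))"
      using dense by (intro AE_I2) auto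
  qed
qed

theorem lemma2p1:
  fixes P :: "'a measure" and W :: "(int^'d) set \<Rightarrow> 'a \<Rightarrow> real" and Mw :: real
  assumes "prob_space P"
    and "Mw > 0"
    and "\<And>e. e \<in> unordered_pairs \<Longrightarrow> W e \<in> borel_measurable P"
    and "prob_space.indep_vars P (\<lambda>_. borel) W unordered_pairs"
    and "\<And>e e'. e \<in> unordered_pairs \<Longrightarrow> e' \<in> unordered_pairs \<Longrightarrow>
           distr P borel (W e) = distr P borel (W e')"
    and "\<And>e. e \<in> unordered_pairs \<Longrightarrow> AE \<omega> in P. 0 \<le> W e \<omega> \<and> W e \<omega> \<le> Mw"
    and "\<And>e. e \<in> unordered_pairs \<Longrightarrow> integral\<^sup>L P (W e) = 1"
  shows "\<exists>\<kappa> \<delta>\<^sub>0::real. 0 < \<kappa> \<and> \<kappa> \<le> 1 \<and> 0 < \<delta>\<^sub>0 \<and> \<delta>\<^sub>0 \<le> 1 \<and>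
    (\<forall>\<theta>::real. \<theta> > 1 / real CARD('d) \<longrightarrow>
      (\<exists>R\<^sub>0 :: 'a \<Rightarrow> ereal. R\<^sub>0 \<in> borel_measurable P \<and> (\<forall>\<omega>. 1 \<le> R\<^sub>0 \<omega>) \<and>
         (AE \<omega> in P. R\<^sub>0 \<omega> < \<infinity>) \<and>
         (AE \<omega> in P. \<forall>R::real. ereal R > R\<^sub>0 \<omega> \<longrightarrow>
            (\<forall>x1 \<in> box R 0. \<forall>x2 \<in> box R 0. \<forall>y \<in> box R 0. \<forall>r::real.
               x1 \<noteq> x2 \<longrightarrow> (ln R) powr \<theta> \<le> r \<longrightarrow> r \<le> R \<longrightarrow>
               real (card (Bdelta (\<lambda>e. W e \<omega>) r \<delta>\<^sub>0 x1 x2 y))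
                 \<ge> \<kappa> * real (card (box r y))))))"
proof -
  interpret prob_space P by fact
  define p where "p = min 1 (1 / (2 * Mw))"
  have "0 < p" "p \<le> 1"
    using \<open>Mw > 0\<close> by (simp_all add: p_def)
  have heavy: "p \<le> prob {\<omega> \<in> space P. 1 / 2 < W e \<omega>}" if "e \<in> unordered_pairs" for e
    using reverse_markov_inequality[OF assms(3,6)[OF that], of "1 / 2"] assms(2) assms(7)[OF that]
    by (simp add: p_def)
  have "p\<^sup>2 \<le> 1"
    using \<open>0 < p\<close> \<open>p \<le> 1\<close> by (simp add: power_le_one)
  then show ?thesis
    using dense_common_nbrs_eventually[OF assms(4) heavy \<open>0 < p\<close>] \<open>0 < p\<close>
    by (intro exI[of _ "p\<^sup>2 / 4"] exI[of _ "1 / 2"]) auto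
qed

end
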